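(* Let $l$ be a linear form in the variables $Y\cup Z$ over a field $\mathbb{F}$ and $t$ a positive integer. Then $\mathrm{maxrank}(M_{l^t})\le t+1$.
   Context: $Y$ and $Z$ are disjoint finite sets of variables (arising from an arbitrary partition of a variable set into $Y$ and $Z$). For $g\in\mathbb{F}[Y,Z]$, the polynomial coefficient matrix $M_g$ has rows indexed by monic multilinear monomials $p$ in $Y$ and columns by monic multilinear monomials $q$ in $Z$, with $M_g(p,q)=G$ iff $g=pq\,G+Q$ uniquely with $G$ containing only variables present in $p,q$ and $Q$ having no monomial divisible by $pq$ that contains only variables present in $p,q$. $\mathrm{maxrank}(M_g)=\max_{S:Y\cup Z\to\mathbb{F}}\mathrm{rank}(M_g|_S)$, where $M_g|_S$ evaluates entries at $S$. *)

theory Defs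
  imports "HOL-Library.Poly_Mapping"
begin

text \<open>Multivariate polynomials over variables of type 'v with coefficients in 'a:
  a monomial is an exponent map from variables to nat, a polynomial maps monomials to coefficients.\<close>
type_synonym ('v, 'a) mpoly = "('v \<Rightarrow>\<^sub>0 nat) \<Rightarrow>\<^sub>0 'a"

definition mono_of :: "'v set \<Rightarrow> ('v \<Rightarrow>\<^sub>0 nat)" where
  "mono_of P = (\<Sum>v\<in>P. Poly_Mapping.single v 1)"

definition mpoly_eval :: "('v \<Rightarrow> 'a::comm_ring_1) \<Rightarrow> ('v, 'a) mpoly \<Rightarrow> 'a" where
  "mpoly_eval S g = (\<Sum>m\<in>Poly_Mapping.keys g. Poly_Mapping.lookup g m * (\<Prod>v\<in>Poly_Mapping.keys m. S v ^ Poly_Mapping.lookup m v))"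

text \<open>Entry M_g(p,q) for p = product of P, q = product of Q: the polynomial G
  (in the variables of P \<union> Q only) with g = p q G + Q', where Q' has no monomial
  divisible by p q using only variables of P \<union> Q.\<close>
definition pcm_entry :: "('v, 'a::comm_ring_1) mpoly \<Rightarrow> 'v set \<Rightarrow> 'v set \<Rightarrow> ('v, 'a) mpoly" where
  "pcm_entry g P Q =
     (\<Sum>m\<in>{m\<in>Poly_Mapping.keys g. Poly_Mapping.keys m \<subseteq> P \<union> Q \<and> (\<forall>v\<in>P \<union> Q. 1 \<le> Poly_Mapping.lookup m v)}.
        Poly_Mapping.single (m - mono_of (P \<union> Q)) (Poly_Mapping.lookup g m))"

definition rows_lin_indep :: "'r set \<Rightarrow> 'c set \<Rightarrow> ('r \<Rightarrow> 'c \<Rightarrow> 'a::field) \<Rightarrow> bool" where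
  "rows_lin_indep R' C M \<longleftrightarrow>
     (\<forall>c. (\<forall>j\<in>C. (\<Sum>i\<in>R'. c i * M i j) = 0) \<longrightarrow> (\<forall>i\<in>R'. c i = 0))"

definition mat_rank :: "'r set \<Rightarrow> 'c set \<Rightarrow> ('r \<Rightarrow> 'c \<Rightarrow> 'a::field) \<Rightarrow> nat" where
  "mat_rank R C M = Max {card R' | R'. R' \<subseteq> R \<and> rows_lin_indep R' C M}"

text \<open>maxrank(M_g) for the partition Y, Z: rows are subsets of Y (monic multilinear
  monomials in Y), columns subsets of Z; maximum of rank over all evaluations S.\<close>
definition maxrank :: "'v set \<Rightarrow> 'v set \<Rightarrow> ('v, 'a::field) mpoly \<Rightarrow> nat" where
  "maxrank Y Z g =
     Max {mat_rank (Pow Y) (Pow Z) (\<lambda>P Q. mpoly_eval S (pcm_entry g P Q)) | S. True}"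

definition lin_form :: "('v \<Rightarrow> 'a::comm_ring_1) \<Rightarrow> 'v set \<Rightarrow> ('v, 'a) mpoly" where
  "lin_form a V = (\<Sum>v\<in>V. Poly_Mapping.single (Poly_Mapping.single v 1) (a v))"

end

theory Submission
  imports Defs
begin

text \<open>Evaluating the entry of \<open>M\<^sub>g\<close> in row \<open>P\<close> and column \<open>Q\<close> at \<open>S\<close> is a linear
  functional of \<open>g\<close> that only sees the monomials whose support is exactly \<open>P \<union> Q\<close>.
  A monomial in the variables of \<open>Y\<close> times one in the variables of \<open>Z\<close> has support \<open>P \<union> Q\<close>
  iff the factors have supports \<open>P\<close> and \<open>Q\<close>, so on a product \<open>g\<^sub>Y g\<^sub>Z\<close> of such polynomials
  the functional is the product of the \<open>P\<close>-entry of \<open>g\<^sub>Y\<close> and the \<open>Q\<close>-entry of \<open>g\<^sub>Z\<close>.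
  Expanding \<open>l\<^sup>t = (l\<^sub>Y + l\<^sub>Z)\<^sup>t\<close> binomially therefore writes every evaluation of
  \<open>M\<^bsub>l\<^sup>t\<^esub>\<close> as a sum of \<open>t + 1\<close> matrices of rank at most one.\<close>

definition monomial_extend :: "('m \<Rightarrow> 'a) \<Rightarrow> ('m \<Rightarrow>\<^sub>0 'a::comm_semiring_1) \<Rightarrow> 'a" where
  "monomial_extend f g = (\<Sum>m\<in>Poly_Mapping.keys g. Poly_Mapping.lookup g m * f m)"

lemma monomial_extend_add: "monomial_extend f (g + h) = monomial_extend f g + monomial_extend f h"
  unfolding monomial_extend_def
  by (rule setsum_keys_plus_distrib) (simp_all add: distrib_right)

lemma monomial_extend_zero [simp]: "monomial_extend f 0 = 0"
  by (simp add: monomial_extend_def)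

lemma monomial_extend_sum: "monomial_extend f (\<Sum>i\<in>I. g i) = (\<Sum>i\<in>I. monomial_extend f (g i))"
  by (induction I rule: infinite_finite_induct) (simp_all add: monomial_extend_add)

lemma monomial_extend_single [simp]: "monomial_extend f (Poly_Mapping.single m c) = c * f m"
  by (simp add: monomial_extend_def)

lemma sum_single_lookup: "(\<Sum>m\<in>Poly_Mapping.keys g. Poly_Mapping.single m (Poly_Mapping.lookup g m)) = g"
  by (rule poly_mapping_eqI) (simp add: lookup_sum lookup_single when_def in_keys_iff)

lemma monomial_extend_mult:
  fixes g h :: "'m::comm_monoid_add \<Rightarrow>\<^sub>0 'a::comm_semiring_1"
  assumes "\<And>m1 m2. m1 \<in> Poly_Mapping.keys g \<Longrightarrow> m2 \<in> Poly_Mapping.keys h \<Longrightarrow> f (m1 + m2) = f1 m1 * f2 m2"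
  shows "monomial_extend f (g * h) = monomial_extend f1 g * monomial_extend f2 h"
proof -
  have "g * h = (\<Sum>m1\<in>Poly_Mapping.keys g. \<Sum>m2\<in>Poly_Mapping.keys h.
      Poly_Mapping.single (m1 + m2) (Poly_Mapping.lookup g m1 * Poly_Mapping.lookup h m2))"
  proof -
    have "g * h = (\<Sum>m1\<in>Poly_Mapping.keys g. Poly_Mapping.single m1 (Poly_Mapping.lookup g m1))
        * (\<Sum>m2\<in>Poly_Mapping.keys h. Poly_Mapping.single m2 (Poly_Mapping.lookup h m2))"
      by (simp only: sum_single_lookup)
    then show ?thesis
      by (simp add: sum_product mult_single)
  qed
  then have "monomial_extend f (g * h) = (\<Sum>m1\<in>Poly_Mapping.keys g. \<Sum>m2\<in>Poly_Mapping.keys h.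
      (Poly_Mapping.lookup g m1 * f1 m1) * (Poly_Mapping.lookup h m2 * f2 m2))"
    by (simp add: monomial_extend_sum assms mult_ac)
  then show ?thesis
    by (simp add: monomial_extend_def sum_product)
qed

lemma mpoly_eval_eq_monomial_extend:
  "mpoly_eval S = monomial_extend (\<lambda>m. \<Prod>v\<in>Poly_Mapping.keys m. S v ^ Poly_Mapping.lookup m v)"
  by (simp add: fun_eq_iff mpoly_eval_def monomial_extend_def)

lemma lookup_mono_of: "finite W \<Longrightarrow> Poly_Mapping.lookup (mono_of W) v = (if v \<in> W then 1 else 0)"
  by (simp add: mono_of_def lookup_sum lookup_single when_def)

definition entry_monomial :: "('v \<Rightarrow> 'a::comm_semiring_1) \<Rightarrow> 'v set \<Rightarrow> ('v \<Rightarrow>\<^sub>0 nat) \<Rightarrow> 'a" where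
  "entry_monomial S W m = (if Poly_Mapping.keys m = W then \<Prod>v\<in>W. S v ^ (Poly_Mapping.lookup m v - 1) else 0)"

lemma mpoly_eval_pcm_entry:
  fixes g :: "('v, 'a::comm_ring_1) mpoly"
  assumes "finite P" "finite Q"
  shows "mpoly_eval S (pcm_entry g P Q) = monomial_extend (entry_monomial S (P \<union> Q)) g"
proof -
  let ?W = "P \<union> Q"
  have full_support: "(Poly_Mapping.keys m \<subseteq> ?W \<and> (\<forall>v\<in>?W. 1 \<le> Poly_Mapping.lookup m v))
      \<longleftrightarrow> Poly_Mapping.keys m = ?W" for m :: "'v \<Rightarrow>\<^sub>0 nat"
    by (auto simp: in_keys_iff Suc_le_eq)
  have divided: "(\<Prod>v\<in>Poly_Mapping.keys (m - mono_of ?W). S v ^ Poly_Mapping.lookup (m - mono_of ?W) v)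
      = (\<Prod>v\<in>?W. S v ^ (Poly_Mapping.lookup m v - 1))" if "Poly_Mapping.keys m = ?W" for m
  proof -
    have lookup_m: "Poly_Mapping.lookup (m - mono_of ?W) v = Poly_Mapping.lookup m v - (if v \<in> ?W then 1 else 0)" for v
      using assms by (simp add: lookup_minus lookup_mono_of)
    have "Poly_Mapping.keys (m - mono_of ?W) \<subseteq> ?W"
      using that by (auto simp: in_keys_iff lookup_m)
    then show ?thesis
      by (intro prod.mono_neutral_cong_left) (use assms that in \<open>auto simp: in_keys_iff lookup_m\<close>)
  qed
  have "mpoly_eval S (pcm_entry g P Q) = (\<Sum>m\<in>{m\<in>Poly_Mapping.keys g. Poly_Mapping.keys m = ?W}.
      Poly_Mapping.lookup g m * (\<Prod>v\<in>?W. S v ^ (Poly_Mapping.lookup m v - 1)))"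
    unfolding pcm_entry_def full_support mpoly_eval_eq_monomial_extend monomial_extend_sum
    by (intro sum.cong) (simp_all add: divided)
  also have "\<dots> = monomial_extend (entry_monomial S ?W) g"
    unfolding monomial_extend_def entry_monomial_def by (simp add: sum.inter_filter if_distrib cong: if_cong)
  finally show ?thesis .
qed

definition vars :: "('v, 'a::zero) mpoly \<Rightarrow> 'v set" where
  "vars g = (\<Union>m\<in>Poly_Mapping.keys g. Poly_Mapping.keys m)"

lemma vars_mult: "vars (g * h) \<subseteq> vars g \<union> vars (h :: ('v, 'a::comm_semiring_1) mpoly)"
proof
  fix v assume "v \<in> vars (g * h)"
  then obtain m where m: "m \<in> Poly_Mapping.keys (g * h)" "v \<in> Poly_Mapping.keys m"
    by (auto simp: vars_def)
  then obtain m1 m2 where "m = m1 + m2" "m1 \<in> Poly_Mapping.keys g" "m2 \<in> Poly_Mapping.keys h"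
    using keys_mult by blast
  then show "v \<in> vars g \<union> vars h"
    using m(2) keys_add[of m1 m2] by (auto simp: vars_def)
qed

lemma vars_power: "vars (g ^ n) \<subseteq> vars (g :: ('v, 'a::comm_semiring_1) mpoly)"
proof (induction n)
  case (Suc n)
  then show ?case using vars_mult[of g "g ^ n"] by auto
qed (simp add: vars_def)

lemma vars_of_nat [simp]: "vars (of_nat n :: ('v, 'a::comm_semiring_1) mpoly) = {}"
  by (simp flip: single_of_nat add: vars_def)

lemma vars_lin_form: "vars (lin_form a V) \<subseteq> V"
proof -
  have "Poly_Mapping.keys (lin_form a V) \<subseteq> (\<Union>v\<in>V. {Poly_Mapping.single v 1})"
    unfolding lin_form_def using keys_sum[of _ V] by (force split: if_splits)
  then show ?thesis
    by (auto simp: vars_def)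
qed
lemma entry_monomial_add:
  assumes "Y \<inter> Z = {}" "P \<subseteq> Y" "Q \<subseteq> Z"
    and "Poly_Mapping.keys m1 \<subseteq> Y" "Poly_Mapping.keys m2 \<subseteq> Z"
  shows "entry_monomial S (P \<union> Q) (m1 + m2) = entry_monomial S P m1 * entry_monomial S Q m2"
proof -
  have keys_plus: "Poly_Mapping.keys (m1 + m2) = Poly_Mapping.keys m1 \<union> Poly_Mapping.keys m2"
    by (auto simp: in_keys_iff lookup_add)
  show ?thesis
  proof (cases "Poly_Mapping.keys m1 = P \<and> Poly_Mapping.keys m2 = Q")
    case True
    then have disjoint: "P \<inter> Q = {}" and "finite P" "finite Q"
      using assms by auto
    have "(\<Prod>v\<in>P \<union> Q. S v ^ (Poly_Mapping.lookup (m1 + m2) v - 1))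
        = (\<Prod>v\<in>P. S v ^ (Poly_Mapping.lookup (m1 + m2) v - 1)) * (\<Prod>v\<in>Q. S v ^ (Poly_Mapping.lookup (m1 + m2) v - 1))"
      using \<open>finite P\<close> \<open>finite Q\<close> disjoint by (rule prod.union_disjoint)
    also have "\<dots> = (\<Prod>v\<in>P. S v ^ (Poly_Mapping.lookup m1 v - 1)) * (\<Prod>v\<in>Q. S v ^ (Poly_Mapping.lookup m2 v - 1))"
      using True disjoint by (intro arg_cong2[where f = "(*)"] prod.cong) (auto simp: lookup_add in_keys_iff)
    finally show ?thesis
      using True keys_plus by (simp add: entry_monomial_def)
  next
    case False
    then have "Poly_Mapping.keys (m1 + m2) \<noteq> P \<union> Q"
      using assms keys_plus by blast
    then show ?thesis
      using False by (simp add: entry_monomial_def)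
  qed
qed
lemma monomial_extend_entry_mult_separated:
  assumes "Y \<inter> Z = {}" "vars g \<subseteq> Y" "vars h \<subseteq> Z" "P \<subseteq> Y" "Q \<subseteq> Z"
  shows "monomial_extend (entry_monomial S (P \<union> Q)) (g * h)
    = monomial_extend (entry_monomial S P) g * monomial_extend (entry_monomial S Q) h"
proof (rule monomial_extend_mult)
  fix m1 m2 assume "m1 \<in> Poly_Mapping.keys g" "m2 \<in> Poly_Mapping.keys h"
  then have "Poly_Mapping.keys m1 \<subseteq> Y" "Poly_Mapping.keys m2 \<subseteq> Z"
    using assms(2,3) by (auto simp: vars_def)
  then show "entry_monomial S (P \<union> Q) (m1 + m2) = entry_monomial S P m1 * entry_monomial S Q m2"
    by (rule entry_monomial_add[OF assms(1,4,5)])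
qed

text \<open>One step of Gaussian elimination: a solution of the system with the unknown \<open>c i0\<close>
  eliminated via equation \<open>n\<close> extends to a solution of the original system.\<close>

lemma homogeneous_system_extend_pivot:
  fixes f :: "nat \<Rightarrow> 'i \<Rightarrow> 'a::field"
  assumes "finite I" "i0 \<in> I" "f n i0 \<noteq> 0"
    and reduced: "\<forall>k<n. (\<Sum>i\<in>I - {i0}. c i * (f k i - f k i0 * f n i / f n i0)) = 0"
  defines "c' \<equiv> c(i0 := - (\<Sum>i\<in>I - {i0}. c i * f n i) / f n i0)"
  shows "\<forall>k<Suc n. (\<Sum>i\<in>I. c' i * f k i) = 0"
proof (intro allI impI)
  fix k assume "k < Suc n"
  have "(\<Sum>i\<in>I - {i0}. c' i * f k i) = (\<Sum>i\<in>I - {i0}. c i * f k i)"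
    by (rule sum.cong) (simp_all add: c'_def)
  then have split: "(\<Sum>i\<in>I. c' i * f k i) = c' i0 * f k i0 + (\<Sum>i\<in>I - {i0}. c i * f k i)"
    using assms(1,2) by (simp add: sum.remove)
  show "(\<Sum>i\<in>I. c' i * f k i) = 0"
  proof (cases "k = n")
    case True
    then show ?thesis
      unfolding split using assms(3) by (simp add: c'_def)
  next
    case False
    with \<open>k < Suc n\<close> have "(\<Sum>i\<in>I - {i0}. c i * f k i) = f k i0 / f n i0 * (\<Sum>i\<in>I - {i0}. c i * f n i)"
      using reduced by (simp add: sum_subtractf sum_distrib_left algebra_simps)
    then show ?thesis
      unfolding split using assms(3) by (simp add: c'_def field_simps)
  qed
qed

lemma homogeneous_system_nontrivial_solution:
  fixes f :: "nat \<Rightarrow> 'i \<Rightarrow> 'a::field"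
  assumes "finite I" "n < card I"
  shows "\<exists>c. (\<forall>k<n. (\<Sum>i\<in>I. c i * f k i) = 0) \<and> (\<exists>i\<in>I. c i \<noteq> 0)"
  using assms
proof (induction n arbitrary: I f)
  case 0
  then show ?case
    by (intro exI[of _ "\<lambda>_. 1"]) (auto simp: card_gt_0_iff)
next
  case (Suc n)
  show ?case
  proof (cases "\<exists>i0\<in>I. f n i0 \<noteq> 0")
    case True
    then obtain i0 where i0: "i0 \<in> I" "f n i0 \<noteq> 0" ..
    obtain c where c: "\<forall>k<n. (\<Sum>i\<in>I - {i0}. c i * (f k i - f k i0 * f n i / f n i0)) = 0"
        and nonzero: "\<exists>i\<in>I - {i0}. c i \<noteq> 0"
      using Suc.IH[of "I - {i0}"] Suc.prems i0(1) by fastforce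
    let ?c' = "c(i0 := - (\<Sum>i\<in>I - {i0}. c i * f n i) / f n i0)"
    have "\<exists>i\<in>I. ?c' i \<noteq> 0"
      using nonzero by auto
    then show ?thesis
      using homogeneous_system_extend_pivot[OF Suc.prems(1) i0 c] by blast
  next
    case False
    then show ?thesis
      using Suc.IH[of I f] Suc.prems by (auto simp: less_Suc_eq)
  qed
qed

lemma mat_rank_le_factorization:
  fixes M :: "'r \<Rightarrow> 'c \<Rightarrow> 'a::field"
  assumes "finite R"
    and factorization: "\<And>i j. i \<in> R \<Longrightarrow> j \<in> C \<Longrightarrow> M i j = (\<Sum>k<n. U k i * V k j)"
  shows "mat_rank R C M \<le> n"
proof -
  have "card R' \<le> n" if R': "R' \<subseteq> R" "rows_lin_indep R' C M" for R'
  proof (rule ccontr)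
    assume "\<not> card R' \<le> n"
    moreover have "finite R'"
      using R'(1) assms(1) finite_subset by blast
    ultimately obtain c where c: "\<forall>k<n. (\<Sum>i\<in>R'. c i * U k i) = 0" and "\<exists>i\<in>R'. c i \<noteq> 0"
      using homogeneous_system_nontrivial_solution[of R' n U] by auto
    moreover have "(\<Sum>i\<in>R'. c i * M i j) = 0" if "j \<in> C" for j
    proof -
      have "(\<Sum>i\<in>R'. c i * M i j) = (\<Sum>k<n. (\<Sum>i\<in>R'. c i * U k i) * V k j)"
        using R'(1) that
        by (simp add: factorization subset_iff sum_distrib_left sum_distrib_right mult.assoc
            sum.swap[of _ R'] cong: sum.cong)
      then show ?thesis
        using c by simp
    qed
    ultimately show False
      using R'(2) unfolding rows_lin_indep_def by blast
  qed
  moreover have "finite {card R' | R'. R' \<subseteq> R \<and> rows_lin_indep R' C M}"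
    using assms(1) by simp
  moreover have "rows_lin_indep {} C M"
    by (simp add: rows_lin_indep_def)
  ultimately show ?thesis
    unfolding mat_rank_def by (subst Max_le_iff) auto
qed

lemma maxrank_le:
  assumes "\<And>S. mat_rank (Pow Y) (Pow Z) (\<lambda>P Q. mpoly_eval S (pcm_entry g P Q)) \<le> n"
  shows "maxrank Y Z g \<le> n"
proof -
  let ?ranks = "{mat_rank (Pow Y) (Pow Z) (\<lambda>P Q. mpoly_eval S (pcm_entry g P Q)) | S. True}"
  have "?ranks \<subseteq> {..n}"
    using assms by blast
  then have "finite ?ranks"
    by (rule finite_subset) simp
  moreover have "?ranks \<noteq> {}"
    by blast
  ultimately show ?thesis
    unfolding maxrank_def using \<open>?ranks \<subseteq> {..n}\<close> by (simp add: subset_iff)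
qed

theorem lemma5:
  fixes Y Z :: "'v set" and a :: "'v \<Rightarrow> 'a::field" and t :: nat
  assumes "finite Y" and "finite Z" and "Y \<inter> Z = {}" and "0 < t"
  shows "maxrank Y Z ((lin_form a (Y \<union> Z)) ^ t) \<le> t + 1"
proof (rule maxrank_le, rule mat_rank_le_factorization)
  fix S and P Q :: "'v set"
  assume "P \<in> Pow Y" "Q \<in> Pow Z"
  then have "P \<subseteq> Y" "Q \<subseteq> Z" "finite P" "finite Q"
    using assms(1,2) finite_subset by auto
  let ?lY = "lin_form a Y" and ?lZ = "lin_form a Z"
  have varsY: "vars (of_nat c * ?lY ^ k) \<subseteq> Y" for c k
    using vars_mult[of "of_nat c" "?lY ^ k"] vars_power[of ?lY k] vars_lin_form[of a Y] by auto
  have varsZ: "vars (?lZ ^ j) \<subseteq> Z" for j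
    using vars_power[of ?lZ j] vars_lin_form[of a Z] by auto
  have "lin_form a (Y \<union> Z) = ?lY + ?lZ"
    unfolding lin_form_def using assms(1-3) by (simp add: sum.union_disjoint)
  then have "mpoly_eval S (pcm_entry (lin_form a (Y \<union> Z) ^ t) P Q)
      = (\<Sum>k\<le>t. monomial_extend (entry_monomial S (P \<union> Q)) ((of_nat (t choose k) * ?lY ^ k) * ?lZ ^ (t - k)))"
    by (simp add: mpoly_eval_pcm_entry[OF \<open>finite P\<close> \<open>finite Q\<close>] binomial_ring monomial_extend_sum)
  also have "\<dots> = (\<Sum>k<t + 1. monomial_extend (entry_monomial S P) (of_nat (t choose k) * ?lY ^ k)
      * monomial_extend (entry_monomial S Q) (?lZ ^ (t - k)))"
    by (simp add: lessThan_Suc_atMost monomial_extend_entry_mult_separated[OF assms(3) varsY varsZ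
        \<open>P \<subseteq> Y\<close> \<open>Q \<subseteq> Z\<close>])
  finally show "mpoly_eval S (pcm_entry (lin_form a (Y \<union> Z) ^ t) P Q) = \<dots>" .
qed (use assms(1) in simp)

end
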